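(* Let $n\ge3$, $j\ge0$, $b\in B$, $(\mu_i)_{i=1}^n\in\mathbb Z^n$ and $\mu=(-\mu_1-\mu_2)\Lambda_0+(\mu_1-\mu_2)\Lambda_1+\cdots+(\mu_{n-1}-\mu_n)\Lambda_{n-1}+\mu_n\Lambda_n$. Then $$g_j(b,\mu)=\sum_\gamma q^{Q}\,\frac{(q^2)_{\gamma_1+\gamma_{\bar1}}\,(q)_j}{(q^2)_{\gamma_1}(q^2)_{\gamma_{\bar1}}(q)_{\gamma_1+\gamma_{\bar1}}\prod_{i=2}^n(q)_{\gamma_i}(q)_{\gamma_{\bar i}}}\,G(b,\mu,\gamma),$$ where $Q=\frac12\sum_{i\in B}\gamma_i(\gamma_i-1)-\gamma_1\gamma_{\bar1}+\sum_{i\in B}H(b\otimes i)\gamma_i$, $G(b,\mu,\gamma)=1$ if $b\in\{1,\bar1\}$ and $G(b,\mu,\gamma)=\dfrac{q^{\mu_1/2}+q^{-\mu_1/2}}{q^{(\gamma_1+\gamma_{\bar1})/2}+q^{-(\gamma_1+\gamma_{\bar1})/2}}$ otherwise, and the sum is over $\gamma=(\gamma_i)_{i\in B}\in\mathbb Z_{\ge0}^{2n}$ with $\gamma_i-\gamma_{\bar i}=\mu_i$ for $i=1,\dots,n$ and $\sum_{i\in B}\gamma_i=j$.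
   Context: Affine algebra $A^{(2)}_{2n-1}$ with fundamental weights $\Lambda_0,\dots,\Lambda_n$, $P_{cl}=\bigoplus\mathbb Z\Lambda_i$. $B=\{1,\dots,n,\bar n,\dots,\bar1\}$ totally ordered by $1\prec\cdots\prec n\prec\bar n\prec\cdots\prec\bar1$. Weights: $wt(\bar b)=-wt(b)$, $wt(b)=\Lambda_b-\Lambda_{b-1}$ for $b\ne2$ (so $wt(1)=\Lambda_1-\Lambda_0$), $wt(2)=\Lambda_2-\Lambda_1-\Lambda_0$. Energy function: $H(b\otimes b')=0$ if $b\prec b'$, $=1$ if $b\succeq b'$, except $H(1\otimes\bar1)=-1$. For $j\ge0$, $b\in B$, $\mu\in P_{cl}$: $g_j(b,\mu)=\sum q^{\sum_{i=1}^j iH(b_{i+1}\otimes b_i)}$, summed over $(b_j,\dots,b_1)\in B^j$ with $wt(b_j)+\cdots+wt(b_1)=\mu$, where $b_{j+1}=b$. $(x)_m=\prod_{i=1}^m(1-x^i)$. *)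

theory Defs
  imports Complex_Main "HOL-Library.FuncSet"
begin

text \<open>Letters of the crystal B: Unb i stands for i, Bar i for bar i (1 \<le> i \<le> n).\<close>
datatype letter = Unb nat | Bar nat

definition Bset :: "nat \<Rightarrow> letter set" where
  "Bset n = Unb ` {1..n} \<union> Bar ` {1..n}"

fun prec :: "letter \<Rightarrow> letter \<Rightarrow> bool" where
  "prec (Unb i) (Unb k) = (i < k)"
| "prec (Unb i) (Bar k) = True"
| "prec (Bar i) (Unb k) = False"
| "prec (Bar i) (Bar k) = (k < i)"

text \<open>Weights in P_cl, as coefficient functions: k \<mapsto> coefficient of Lambda_k.\<close>
definition wtU :: "nat \<Rightarrow> nat \<Rightarrow> int" where
  "wtU i = (\<lambda>k. (if k = i then 1 else 0) - (if k = i - 1 then 1 else 0)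
                 - (if i = 2 \<and> k = 0 then 1 else 0))"

fun wt :: "letter \<Rightarrow> nat \<Rightarrow> int" where
  "wt (Unb i) = wtU i"
| "wt (Bar i) = (\<lambda>k. - wtU i k)"

definition H :: "letter \<Rightarrow> letter \<Rightarrow> int" where
  "H x y = (if x = Unb 1 \<and> y = Bar 1 then -1 else if prec x y then 0 else 1)"

text \<open>g_j(b,mu): paths (b_j,...,b_1) are functions bs on {1..j}; b_{j+1} = b.\<close>
definition gfun :: "nat \<Rightarrow> nat \<Rightarrow> letter \<Rightarrow> (nat \<Rightarrow> int) \<Rightarrow> real \<Rightarrow> real" where
  "gfun n j b mu q =
     (\<Sum>bs \<in> {bs \<in> Pi\<^sub>E {1..j} (\<lambda>_. Bset n). (\<lambda>k. \<Sum>i=1..j. wt (bs i) k) = mu}.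
        q powr (real_of_int (\<Sum>i=1..j. int i * H (if i = j then b else bs (i + 1)) (bs i))))"

definition qpoch :: "real \<Rightarrow> nat \<Rightarrow> real" where
  "qpoch x m = (\<Prod>i=1..m. 1 - x ^ i)"

definition muw :: "nat \<Rightarrow> (nat \<Rightarrow> int) \<Rightarrow> nat \<Rightarrow> int" where
  "muw n mus = (\<lambda>k. if k = 0 then - mus 1 - mus 2
                     else if k < n then mus k - mus (k + 1)
                     else if k = n then mus n else 0)"

definition Gam :: "nat \<Rightarrow> nat \<Rightarrow> (nat \<Rightarrow> int) \<Rightarrow> (letter \<Rightarrow> nat) set" where
  "Gam n j mus = {\<gamma> \<in> Pi\<^sub>E (Bset n) (\<lambda>_. UNIV).
      (\<forall>i\<in>{1..n}. int (\<gamma> (Unb i)) - int (\<gamma> (Bar i)) = mus i) \<and> (\<Sum>x\<in>Bset n. \<gamma> x) = j}"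

definition Qexp :: "nat \<Rightarrow> letter \<Rightarrow> (letter \<Rightarrow> nat) \<Rightarrow> real" where
  "Qexp n b \<gamma> = (1/2) * (\<Sum>x\<in>Bset n. real (\<gamma> x) * (real (\<gamma> x) - 1))
     - real (\<gamma> (Unb 1)) * real (\<gamma> (Bar 1))
     + (\<Sum>x\<in>Bset n. real_of_int (H b x) * real (\<gamma> x))"

definition Gfac :: "letter \<Rightarrow> (nat \<Rightarrow> int) \<Rightarrow> (letter \<Rightarrow> nat) \<Rightarrow> real \<Rightarrow> real" where
  "Gfac b mus \<gamma> q = (if b \<in> {Unb 1, Bar 1} then 1 else
     (q powr (real_of_int (mus 1) / 2) + q powr (- real_of_int (mus 1) / 2)) /
     (q powr (real (\<gamma> (Unb 1) + \<gamma> (Bar 1)) / 2) + q powr (- real (\<gamma> (Unb 1) + \<gamma> (Bar 1)) / 2)))"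

definition rhs :: "nat \<Rightarrow> nat \<Rightarrow> letter \<Rightarrow> (nat \<Rightarrow> int) \<Rightarrow> real \<Rightarrow> real" where
  "rhs n j b mus q = (\<Sum>\<gamma> \<in> Gam n j mus.
     q powr (Qexp n b \<gamma>) *
     (qpoch (q^2) (\<gamma> (Unb 1) + \<gamma> (Bar 1)) * qpoch q j) /
     (qpoch (q^2) (\<gamma> (Unb 1)) * qpoch (q^2) (\<gamma> (Bar 1)) * qpoch q (\<gamma> (Unb 1) + \<gamma> (Bar 1))
      * (\<Prod>i=2..n. qpoch q (\<gamma> (Unb i)) * qpoch q (\<gamma> (Bar i))))
     * Gfac b mus \<gamma> q)"

end

theory Submission
  imports Defs
begin

text \<open>
  Grouping the paths by their content gamma (how often each letter occurs) turns the weight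
  condition into gamma(i) - gamma(bar i) = mu(i), so g_j(b, mu) is the sum over gamma of the
  energy generating function F_j(b, gamma) of the paths with content gamma. Removing the letter
  next to b gives the recursion F_j(b, gamma) = sum_x q^(j H(b, x)) F_(j-1)(x, gamma - e_x).
  The summand of the right-hand side satisfies the same recursion and initial values: after
  dividing out the factor that does not depend on b, the recursion becomes an identity in which,
  listing the letters as 1 < ... < bar 1, the terms of all letters except 1 and bar 1 telescope,
  leaving a rational identity in q^gamma(1), q^gamma(bar 1) and q^j.
\<close>

definition letter_at :: "nat \<Rightarrow> nat \<Rightarrow> letter" where
  "letter_at n p = (if p \<le> n then Unb p else Bar (2*n + 1 - p))"

lemma bij_betw_letter_at: "bij_betw (letter_at n) {1..2*n} (Bset n)"
proof (rule bij_betw_imageI)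
  show "inj_on (letter_at n) {1..2*n}"
    unfolding inj_on_def letter_at_def by auto
  show "letter_at n ` {1..2*n} = Bset n"
  proof
    show "letter_at n ` {1..2*n} \<subseteq> Bset n"
      unfolding letter_at_def Bset_def by (auto simp: image_iff)
    have "Unb i = letter_at n i" "Bar i = letter_at n (2*n + 1 - i)" if "i \<in> {1..n}" for i
      using that unfolding letter_at_def by auto
    then show "Bset n \<subseteq> letter_at n ` {1..2*n}"
      unfolding Bset_def by force
  qed
qed

lemma sum_Bset_letter_at: "(\<Sum>x\<in>Bset n. f x) = (\<Sum>p=1..2*n. f (letter_at n p))"
  by (rule sum.reindex_bij_betw[OF bij_betw_letter_at, symmetric])

lemma H_letter_at:
  assumes "p \<in> {1..2*n}" "r \<in> {1..2*n}"
  shows "H (letter_at n p) (letter_at n r) = (if p = 1 \<and> r = 2*n then -1 else if p < r then 0 else 1)"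
  using assms unfolding H_def letter_at_def by auto

lemma letter_at_first: "n \<ge> 1 \<Longrightarrow> letter_at n 1 = Unb 1"
  and letter_at_last: "n \<ge> 1 \<Longrightarrow> letter_at n (2*n) = Bar 1"
  unfolding letter_at_def by auto

lemma letter_at_inner: "p \<in> {2..2*n-1} \<Longrightarrow> letter_at n p \<notin> {Unb 1, Bar 1}"
  unfolding letter_at_def by auto

lemma finite_Bset [simp]: "finite (Bset n)"
  unfolding Bset_def by auto

lemma sum_Bset_Unb_Bar:
  "(\<Sum>x\<in>Bset n. f x) = (\<Sum>i=1..n. f (Unb i)) + (\<Sum>i=1..n. f (Bar i))"
  unfolding Bset_def
  by (subst sum.union_disjoint) (auto simp: sum.reindex inj_on_def)

definition content :: "nat \<Rightarrow> nat \<Rightarrow> (nat \<Rightarrow> letter) \<Rightarrow> letter \<Rightarrow> nat" where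
  "content n j bs = (\<lambda>x\<in>Bset n. card {i\<in>{1..j}. bs i = x})"

lemma content_in_PiE: "content n j bs \<in> Pi\<^sub>E (Bset n) (\<lambda>_. UNIV)"
  unfolding content_def by auto

lemma sum_path_by_content:
  fixes f :: "letter \<Rightarrow> 'a::comm_semiring_1"
  assumes "bs \<in> Pi\<^sub>E {1..j} (\<lambda>_. Bset n)"
  shows "(\<Sum>i=1..j. f (bs i)) = (\<Sum>x\<in>Bset n. of_nat (content n j bs x) * f x)"
proof -
  have "bs ` {1..j} \<subseteq> Bset n" using assms by auto
  then have "(\<Sum>i=1..j. f (bs i)) = (\<Sum>x\<in>Bset n. \<Sum>i\<in>{i\<in>{1..j}. bs i = x}. f (bs i))"
    by (intro sum.group[symmetric]) simp_all
  also have "\<dots> = (\<Sum>x\<in>Bset n. of_nat (content n j bs x) * f x)"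
    unfolding content_def by (intro sum.cong) simp_all
  finally show ?thesis .
qed

lemma sum_content:
  assumes "bs \<in> Pi\<^sub>E {1..j} (\<lambda>_. Bset n)"
  shows "(\<Sum>x\<in>Bset n. content n j bs x) = j"
  using sum_path_by_content[OF assms, of "\<lambda>_. 1 :: nat"] by simp

lemma sum_wtU_eq_muw:
  assumes "n \<ge> 2"
  shows "(\<lambda>k. \<Sum>i=1..n. m i * wtU i k) = muw n m"
proof
  fix k :: nat
  have pred: "(k = i - 1) = (i = k + 1)" if "i \<in> {1..n}" for i
    using that by auto
  have "(\<Sum>i=1..n. m i * wtU i k) = (\<Sum>i=1..n. if i = k then m i else 0)
      - (\<Sum>i=1..n. if i = k + 1 then m i else 0) - (\<Sum>i=1..n. if i = 2 \<and> k = 0 then m i else 0)"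
    unfolding sum_subtractf[symmetric] wtU_def
    by (intro sum.cong) (auto simp: pred algebra_simps)
  also have "\<dots> = muw n m k"
    using assms unfolding muw_def by (auto simp: sum.delta')
  finally show "(\<Sum>i=1..n. m i * wtU i k) = muw n m k" .
qed

lemma path_weight_eq_muw:
  assumes "n \<ge> 2" "bs \<in> Pi\<^sub>E {1..j} (\<lambda>_. Bset n)"
  shows "(\<lambda>k. \<Sum>i=1..j. wt (bs i) k)
    = muw n (\<lambda>i. int (content n j bs (Unb i)) - int (content n j bs (Bar i)))"
proof -
  have "(\<Sum>i=1..j. wt (bs i) k)
      = (\<Sum>i=1..n. (int (content n j bs (Unb i)) - int (content n j bs (Bar i))) * wtU i k)" for k
    unfolding sum_path_by_content[OF assms(2), of "\<lambda>x. wt x k"] sum_Bset_Unb_Bar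
    by (simp add: left_diff_distrib sum_subtractf sum_negf)
  then show ?thesis
    by (simp add: sum_wtU_eq_muw[OF assms(1), symmetric])
qed

lemma sum_muw_from:
  assumes "1 \<le> i" "i \<le> n"
  shows "(\<Sum>k=i..n. muw n m k) = m i"
  using assms(2,1)
proof (induction i rule: inc_induct)
  case base
  then show ?case unfolding muw_def by simp
next
  case (step i)
  then have "(\<Sum>k=i..n. muw n m k) = muw n m i + (\<Sum>k=Suc i..n. muw n m k)"
    by (intro sum.atLeast_Suc_atMost) simp
  with step show ?case unfolding muw_def by simp
qed

lemma muw_eq_iff:
  assumes "n \<ge> 2"
  shows "muw n m = muw n m' \<longleftrightarrow> (\<forall>i\<in>{1..n}. m i = m' i)"
proof
  assume "muw n m = muw n m'"
  then show "\<forall>i\<in>{1..n}. m i = m' i"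
    by (metis atLeastAtMost_iff sum_muw_from)
next
  assume "\<forall>i\<in>{1..n}. m i = m' i"
  then show "muw n m = muw n m'"
    using assms unfolding muw_def by (auto intro!: ext)
qed

lemma path_weight_eq_muw_iff:
  assumes "n \<ge> 2" "bs \<in> Pi\<^sub>E {1..j} (\<lambda>_. Bset n)"
  shows "(\<lambda>k. \<Sum>i=1..j. wt (bs i) k) = muw n mus \<longleftrightarrow> content n j bs \<in> Gam n j mus"
  unfolding path_weight_eq_muw[OF assms] muw_eq_iff[OF assms(1)] Gam_def
  using content_in_PiE sum_content[OF assms(2)] by simp

definition energy :: "nat \<Rightarrow> letter \<Rightarrow> (nat \<Rightarrow> letter) \<Rightarrow> int" where
  "energy j b bs = (\<Sum>i=1..j. int i * H (if i = j then b else bs (i + 1)) (bs i))"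

definition paths_gf :: "nat \<Rightarrow> real \<Rightarrow> nat \<Rightarrow> letter \<Rightarrow> (letter \<Rightarrow> nat) \<Rightarrow> real" where
  "paths_gf n q j b \<gamma> = (\<Sum>bs\<in>Pi\<^sub>E {1..j} (\<lambda>_. Bset n).
     if content n j bs = \<gamma> then q powr energy j b bs else 0)"

lemma energy_extend:
  "energy (Suc j) b (bs(Suc j := y)) = int (Suc j) * H b y + energy j y bs"
proof -
  have "energy j y bs = (\<Sum>i=1..j. int i * H (if i = Suc j then b else (bs(Suc j := y)) (i + 1))
      ((bs(Suc j := y)) i))"
    unfolding energy_def by (intro sum.cong) auto
  then show ?thesis
    unfolding energy_def by simp
qed

lemma content_extend:
  assumes "bs \<in> Pi\<^sub>E {1..j} (\<lambda>_. Bset n)" "y \<in> Bset n"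
  shows "content n (Suc j) (bs(Suc j := y)) = (content n j bs)(y := content n j bs y + 1)"
proof
  fix x
  show "content n (Suc j) (bs(Suc j := y)) x = ((content n j bs)(y := content n j bs y + 1)) x"
  proof (cases "x \<in> Bset n")
    case True
    have "{i\<in>{1..Suc j}. (bs(Suc j := y)) i = x}
        = {i\<in>{1..j}. bs i = x} \<union> (if y = x then {Suc j} else {})"
      by auto
    then have "card {i\<in>{1..Suc j}. (bs(Suc j := y)) i = x}
        = card {i\<in>{1..j}. bs i = x} + (if y = x then 1 else 0)"
      by (simp add: card_insert_if)
    then show ?thesis
      using True assms unfolding content_def by auto
  next
    case False
    then show ?thesis
      using assms unfolding content_def by auto
  qed
qed

lemma fun_upd_Suc_eq_iff:
  fixes c \<gamma> :: "'a \<Rightarrow> nat"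
  shows "c(y := c y + 1) = \<gamma> \<longleftrightarrow> 0 < \<gamma> y \<and> c = \<gamma>(y := \<gamma> y - 1)"
  by (auto simp: fun_eq_iff)

lemma paths_gf_Suc:
  "paths_gf n q (Suc j) b \<gamma> = (\<Sum>y\<in>Bset n. if 0 < \<gamma> y then
      q powr (real (Suc j) * H b y) * paths_gf n q j y (\<gamma>(y := \<gamma> y - 1)) else 0)"
proof -
  let ?A = "Pi\<^sub>E {1..j} (\<lambda>_. Bset n)"
  let ?h = "\<lambda>bs. if content n (Suc j) bs = \<gamma> then q powr energy (Suc j) b bs else 0"
  have "{1..Suc j} = insert (Suc j) {1..j}" by auto
  then have "paths_gf n q (Suc j) b \<gamma> = sum ?h (Pi\<^sub>E (insert (Suc j) {1..j}) (\<lambda>_. Bset n))"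
    unfolding paths_gf_def by simp
  also have "\<dots> = sum (?h \<circ> (\<lambda>(y, bs). bs(Suc j := y))) (Bset n \<times> ?A)"
    unfolding PiE_insert_eq
    by (rule sum.reindex) (rule inj_combinator[where T="\<lambda>_. Bset n", simplified], simp)
  also have "\<dots> = (\<Sum>y\<in>Bset n. \<Sum>bs\<in>?A. ?h (bs(Suc j := y)))"
    by (subst sum.cartesian_product) (auto intro!: sum.cong)
  also have "\<dots> = (\<Sum>y\<in>Bset n. if 0 < \<gamma> y then
      q powr (real (Suc j) * H b y) * paths_gf n q j y (\<gamma>(y := \<gamma> y - 1)) else 0)"
  proof (intro sum.cong refl)
    fix y assume y: "y \<in> Bset n"
    have "?h (bs(Suc j := y)) = (if 0 < \<gamma> y then q powr (real (Suc j) * H b y) *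
        (if content n j bs = \<gamma>(y := \<gamma> y - 1) then q powr energy j y bs else 0) else 0)"
      if "bs \<in> ?A" for bs
      unfolding content_extend[OF that y] energy_extend fun_upd_Suc_eq_iff
      by (auto simp: powr_add)
    then show "(\<Sum>bs\<in>?A. ?h (bs(Suc j := y))) = (if 0 < \<gamma> y then
        q powr (real (Suc j) * H b y) * paths_gf n q j y (\<gamma>(y := \<gamma> y - 1)) else 0)"
      unfolding paths_gf_def by (simp add: sum_distrib_left)
  qed
  finally show ?thesis .
qed

lemma power_neq_one:
  fixes x :: real
  assumes "0 \<le> x" "x \<noteq> 1" "0 < a"
  shows "x ^ a \<noteq> 1"
  using assms power_eq_imp_eq_base[of x a 1] by auto

lemma qpoch_neq_0: "0 \<le> x \<Longrightarrow> x \<noteq> 1 \<Longrightarrow> qpoch x m \<noteq> 0"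
  unfolding qpoch_def using power_neq_one[of x] by auto

lemma qpoch_Suc: "qpoch x (Suc m) = qpoch x m * (1 - x ^ Suc m)"
  unfolding qpoch_def by simp

lemma qpoch_pred: "0 < k \<Longrightarrow> qpoch x k = qpoch x (k - 1) * (1 - x ^ k)"
  using qpoch_Suc[of x "k - 1"] by simp

definition qdenom :: "nat \<Rightarrow> real \<Rightarrow> (letter \<Rightarrow> nat) \<Rightarrow> real" where
  "qdenom n q \<gamma> = qpoch (q^2) (\<gamma> (Unb 1)) * qpoch (q^2) (\<gamma> (Bar 1))
      * qpoch q (\<gamma> (Unb 1) + \<gamma> (Bar 1)) * (\<Prod>i=2..n. qpoch q (\<gamma> (Unb i)) * qpoch q (\<gamma> (Bar i)))"

definition qnumer :: "real \<Rightarrow> nat \<Rightarrow> (letter \<Rightarrow> nat) \<Rightarrow> real" where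
  "qnumer q j \<gamma> = qpoch (q^2) (\<gamma> (Unb 1) + \<gamma> (Bar 1)) * qpoch q j"

lemma qdenom_neq_0: "0 < q \<Longrightarrow> q \<noteq> 1 \<Longrightarrow> qdenom n q \<gamma> \<noteq> 0"
  using power_neq_one[of q 2] unfolding qdenom_def by (simp add: qpoch_neq_0)

lemma qdenom_remove_inner:
  assumes "x \<in> Bset n" "x \<notin> {Unb 1, Bar 1}" "0 < \<gamma> x"
  shows "qdenom n q \<gamma> = qdenom n q (\<gamma>(x := \<gamma> x - 1)) * (1 - q ^ \<gamma> x)"
proof -
  let ?g = "\<gamma>(x := \<gamma> x - 1)"
  let ?f = "\<lambda>\<delta> i. qpoch q (\<delta> (Unb i)) * qpoch q (\<delta> (Bar i))"
  obtain k where k1: "k \<in> {1..n}" and k: "x = Unb k \<or> x = Bar k"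
    using assms(1) unfolding Bset_def by blast
  with assms(2) have k2: "k \<in> {2..n}"
    by auto
  have "(\<Prod>i\<in>{2..n}-{k}. ?f ?g i) = (\<Prod>i\<in>{2..n}-{k}. ?f \<gamma> i)"
    using k by (intro prod.cong) auto
  then have "(\<Prod>i=2..n. ?f ?g i) = ?f ?g k * (\<Prod>i\<in>{2..n}-{k}. ?f \<gamma> i)"
    using k2 by (simp add: prod.remove)
  moreover have "(\<Prod>i=2..n. ?f \<gamma> i) = ?f \<gamma> k * (\<Prod>i\<in>{2..n}-{k}. ?f \<gamma> i)"
    using k2 by (simp add: prod.remove)
  moreover have "?f \<gamma> k = ?f ?g k * (1 - q ^ \<gamma> x)"
    using k qpoch_pred[OF assms(3)] by auto
  moreover have "?g (Unb 1) = \<gamma> (Unb 1)" "?g (Bar 1) = \<gamma> (Bar 1)"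
    using assms(2) by auto
  ultimately show ?thesis
    unfolding qdenom_def by (simp only:) (simp add: mult_ac)
qed

lemma qdenom_remove_one:
  assumes "x \<in> {Unb 1, Bar 1}" "0 < \<gamma> x"
  shows "qdenom n q \<gamma> = qdenom n q (\<gamma>(x := \<gamma> x - 1)) * (1 - (q^2) ^ \<gamma> x)
     * (1 - q ^ (\<gamma> (Unb 1) + \<gamma> (Bar 1)))"
proof -
  let ?g = "\<gamma>(x := \<gamma> x - 1)"
  have inner: "(\<Prod>i=2..n. qpoch q (?g (Unb i)) * qpoch q (?g (Bar i)))
      = (\<Prod>i=2..n. qpoch q (\<gamma> (Unb i)) * qpoch q (\<gamma> (Bar i)))"
    using assms(1) by (intro prod.cong) auto
  have "?g (Unb 1) + ?g (Bar 1) = \<gamma> (Unb 1) + \<gamma> (Bar 1) - 1"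
    using assms by auto
  then have sum: "qpoch q (\<gamma> (Unb 1) + \<gamma> (Bar 1))
      = qpoch q (?g (Unb 1) + ?g (Bar 1)) * (1 - q ^ (\<gamma> (Unb 1) + \<gamma> (Bar 1)))"
    using assms by (simp only:) (rule qpoch_pred, auto)
  have x: "qpoch (q^2) (\<gamma> x) = qpoch (q^2) (?g x) * (1 - (q^2) ^ \<gamma> x)"
    using qpoch_pred[OF assms(2)] by simp
  have "x = Unb 1 \<and> ?g (Bar 1) = \<gamma> (Bar 1) \<or> x = Bar 1 \<and> ?g (Unb 1) = \<gamma> (Unb 1)"
    using assms(1) by auto
  then show ?thesis
    using x unfolding qdenom_def inner sum by (elim disjE conjE) (simp_all add: mult_ac)
qed

lemma qnumer_remove_inner:
  "x \<notin> {Unb 1, Bar 1} \<Longrightarrow> qnumer q (Suc j) \<gamma> = qnumer q j (\<gamma>(x := v)) * (1 - q ^ Suc j)"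
  unfolding qnumer_def by (auto simp: qpoch_Suc)

lemma qnumer_remove_one:
  assumes "x \<in> {Unb 1, Bar 1}" "0 < \<gamma> x"
  shows "qnumer q (Suc j) \<gamma> = qnumer q j (\<gamma>(x := \<gamma> x - 1))
     * (1 - (q^2) ^ (\<gamma> (Unb 1) + \<gamma> (Bar 1))) * (1 - q ^ Suc j)"
proof -
  have "(\<gamma>(x := \<gamma> x - 1)) (Unb 1) + (\<gamma>(x := \<gamma> x - 1)) (Bar 1) = \<gamma> (Unb 1) + \<gamma> (Bar 1) - 1"
    using assms by auto
  moreover have "qpoch (q^2) (\<gamma> (Unb 1) + \<gamma> (Bar 1))
      = qpoch (q^2) (\<gamma> (Unb 1) + \<gamma> (Bar 1) - 1) * (1 - (q^2) ^ (\<gamma> (Unb 1) + \<gamma> (Bar 1)))"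
    using assms by (intro qpoch_pred) auto
  ultimately show ?thesis
    unfolding qnumer_def qpoch_Suc by (simp only:) (simp add: mult_ac)
qed

definition ratio_factor :: "real \<Rightarrow> letter \<Rightarrow> (letter \<Rightarrow> nat) \<Rightarrow> real" where
  "ratio_factor q x \<gamma> = (if x \<in> {Unb 1, Bar 1}
     then (1 - (q^2) ^ \<gamma> x) / (1 + q ^ (\<gamma> (Unb 1) + \<gamma> (Bar 1)))
     else 1 - q ^ \<gamma> x)"

lemma qnumer_qdenom_remove:
  assumes q: "0 < q" "q \<noteq> 1" and x: "x \<in> Bset n" "0 < \<gamma> x"
  shows "qnumer q j (\<gamma>(x := \<gamma> x - 1)) / qdenom n q (\<gamma>(x := \<gamma> x - 1))
     = qnumer q (Suc j) \<gamma> / qdenom n q \<gamma> * ratio_factor q x \<gamma> / (1 - q ^ Suc j)"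
proof -
  let ?g = "\<gamma>(x := \<gamma> x - 1)"
  let ?s = "\<gamma> (Unb 1) + \<gamma> (Bar 1)"
  have j: "1 - q ^ Suc j \<noteq> 0" and d: "qdenom n q ?g \<noteq> 0"
    using power_neq_one[of q "Suc j"] qdenom_neq_0 q by auto
  show ?thesis
  proof (cases "x \<in> {Unb 1, Bar 1}")
    case True
    have "1 - q ^ ?s \<noteq> 0" "1 - (q^2) ^ \<gamma> x \<noteq> 0"
      using power_neq_one[of q ?s] power_neq_one[of "q^2" "\<gamma> x"] power_neq_one[of q 2] True x q
      by auto
    moreover have "1 + q ^ ?s \<noteq> 0"
      using q(1) by (intro add_pos_pos[THEN less_imp_neq, symmetric]) auto
    moreover have "1 - (q^2) ^ ?s = (1 - q ^ ?s) * (1 + q ^ ?s)"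
      by (simp add: power2_eq_square power_mult_distrib algebra_simps)
    ultimately show ?thesis
      using True j d x(2)
      unfolding qdenom_remove_one[of x \<gamma>, OF True x(2)] qnumer_remove_one[of x \<gamma>, OF True x(2)] ratio_factor_def
      by (simp add: divide_simps mult_ac)
  next
    case False
    have "1 - q ^ \<gamma> x \<noteq> 0"
      using power_neq_one[of q "\<gamma> x"] q x by auto
    then show ?thesis
      using False j d
      unfolding qdenom_remove_inner[of x n \<gamma>, OF x(1) False x(2)] qnumer_remove_inner[OF False, where v = "\<gamma> x - 1"] ratio_factor_def
      by (simp add: divide_simps mult_ac)
  qed
qed

lemma sum_fun_upd:
  fixes f :: "'a \<Rightarrow> 'b \<Rightarrow> 'c::ab_group_add"
  assumes "finite A" "x \<in> A"
  shows "(\<Sum>y\<in>A. f y ((g(x := v)) y)) = (\<Sum>y\<in>A. f y (g y)) - f x (g x) + f x v"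
proof -
  have "(\<Sum>y\<in>A-{x}. f y ((g(x := v)) y)) = (\<Sum>y\<in>A-{x}. f y (g y))"
    by (intro sum.cong) auto
  then show ?thesis
    using assms by (simp add: sum.remove)
qed

definition quad_exp :: "nat \<Rightarrow> (letter \<Rightarrow> nat) \<Rightarrow> real" where
  "quad_exp n \<gamma> = (1/2) * (\<Sum>x\<in>Bset n. real (\<gamma> x) * (real (\<gamma> x) - 1))
     - real (\<gamma> (Unb 1)) * real (\<gamma> (Bar 1))"

definition lin_exp :: "nat \<Rightarrow> letter \<Rightarrow> (letter \<Rightarrow> nat) \<Rightarrow> real" where
  "lin_exp n b \<gamma> = (\<Sum>x\<in>Bset n. real_of_int (H b x) * real (\<gamma> x))"

lemma Qexp_eq: "Qexp n b \<gamma> = quad_exp n \<gamma> + lin_exp n b \<gamma>"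
  unfolding Qexp_def quad_exp_def lin_exp_def by simp

lemma quad_exp_remove:
  assumes "x \<in> Bset n" "0 < \<gamma> x"
  shows "quad_exp n (\<gamma>(x := \<gamma> x - 1)) = quad_exp n \<gamma> - (real (\<gamma> x) - 1)
     + (if x = Unb 1 then real (\<gamma> (Bar 1)) else if x = Bar 1 then real (\<gamma> (Unb 1)) else 0)"
proof -
  have "real (\<gamma> x - 1) = real (\<gamma> x) - 1"
    using assms(2) by simp
  then show ?thesis
    unfolding quad_exp_def
    using sum_fun_upd[OF finite_Bset assms(1), of "\<lambda>_ k. real k * (real k - 1)" \<gamma> "\<gamma> x - 1"]
    by (auto simp: algebra_simps)
qed

lemma lin_exp_remove:
  assumes "x \<in> Bset n" "0 < \<gamma> x"
  shows "lin_exp n y (\<gamma>(x := \<gamma> x - 1)) = lin_exp n y \<gamma> - H y x"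
  unfolding lin_exp_def
  using sum_fun_upd[OF finite_Bset assms(1), of "\<lambda>z k. real_of_int (H y z) * real k" \<gamma> "\<gamma> x - 1"] assms(2)
  by (simp add: of_nat_diff algebra_simps)

definition G_rat :: "real \<Rightarrow> letter \<Rightarrow> (letter \<Rightarrow> nat) \<Rightarrow> real" where
  "G_rat q b \<gamma> = (if b \<in> {Unb 1, Bar 1} then 1 else
     (q ^ \<gamma> (Unb 1) + q ^ \<gamma> (Bar 1)) / (1 + q ^ (\<gamma> (Unb 1) + \<gamma> (Bar 1))))"

definition closed_form :: "nat \<Rightarrow> real \<Rightarrow> nat \<Rightarrow> letter \<Rightarrow> (letter \<Rightarrow> nat) \<Rightarrow> real" where
  "closed_form n q j b \<gamma> = q powr Qexp n b \<gamma> * (qnumer q j \<gamma> / qdenom n q \<gamma>) * G_rat q b \<gamma>"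

text \<open>
  q^(J H(b, x)) times the closed form at (J - 1, x, gamma - e_x), divided by the factor
  q^quad_exp * qnumer / (qdenom * (1 - q^J)) common to all x (see closed_form_remove); the
  extra summand for x in {1, bar 1} comes from the term -gamma(1) gamma(bar 1) of the
  quadratic exponent.
\<close>
definition recursion_term :: "nat \<Rightarrow> real \<Rightarrow> nat \<Rightarrow> letter \<Rightarrow> letter \<Rightarrow> (letter \<Rightarrow> nat) \<Rightarrow> real" where
  "recursion_term n q J b x \<gamma> = q powr (real J * H b x + lin_exp n x \<gamma> - real (\<gamma> x)
      + (if x = Unb 1 then real (\<gamma> (Bar 1)) else if x = Bar 1 then real (\<gamma> (Unb 1)) else 0))
      * ratio_factor q x \<gamma> * G_rat q x \<gamma>"

lemma H_refl: "H x x = 1"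
  unfolding H_def by (cases x) auto

lemma closed_form_remove:
  assumes q: "0 < q" "q \<noteq> 1" and x: "x \<in> Bset n" "0 < \<gamma> x"
  shows "q powr (real (Suc j) * H b x) * closed_form n q j x (\<gamma>(x := \<gamma> x - 1))
    = q powr quad_exp n \<gamma> * qnumer q (Suc j) \<gamma> / qdenom n q \<gamma> / (1 - q ^ Suc j)
      * recursion_term n q (Suc j) b x \<gamma>"
proof -
  let ?g = "\<gamma>(x := \<gamma> x - 1)"
  let ?e = "real (Suc j) * H b x + lin_exp n x \<gamma> - real (\<gamma> x)
      + (if x = Unb 1 then real (\<gamma> (Bar 1)) else if x = Bar 1 then real (\<gamma> (Unb 1)) else 0)"
  have exp: "real (Suc j) * H b x + Qexp n x ?g = quad_exp n \<gamma> + ?e"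
    unfolding Qexp_eq quad_exp_remove[of x n \<gamma>, OF x] lin_exp_remove[of x n \<gamma>, OF x] H_refl by simp
  have G: "G_rat q x ?g = G_rat q x \<gamma>"
    unfolding G_rat_def by auto
  have "q powr (real (Suc j) * H b x) * closed_form n q j x ?g
      = q powr (real (Suc j) * H b x + Qexp n x ?g) * (qnumer q j ?g / qdenom n q ?g) * G_rat q x ?g"
    unfolding closed_form_def powr_add by (simp only: mult.assoc)
  also have "\<dots> = q powr quad_exp n \<gamma> * q powr ?e
      * (qnumer q (Suc j) \<gamma> / qdenom n q \<gamma> * ratio_factor q x \<gamma> / (1 - q ^ Suc j)) * G_rat q x \<gamma>"
    unfolding exp powr_add G qnumer_qdenom_remove[of q x n \<gamma>, OF q x] ..
  also have "\<dots> = q powr quad_exp n \<gamma> * qnumer q (Suc j) \<gamma> / qdenom n q \<gamma> / (1 - q ^ Suc j)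
      * recursion_term n q (Suc j) b x \<gamma>"
    unfolding recursion_term_def by (simp add: divide_inverse mult_ac)
  finally show ?thesis .
qed

lemma sum_telescope_down:
  fixes f :: "nat \<Rightarrow> 'a::ab_group_add"
  assumes "m \<le> l"
  shows "(\<Sum>p=Suc m..l. f (p - 1) - f p) = f m - f l"
proof -
  have "(\<Sum>p=Suc m..l. f (p - 1) - f p) = - (\<Sum>p=Suc m..l. f p - f (p - 1))"
    by (simp add: sum_negf[symmetric])
  then show ?thesis
    using sum_telescope''[OF assms, of f] by simp
qed

lemma sum_weighted_telescope:
  fixes f :: "nat \<Rightarrow> 'a::comm_ring_1"
  assumes "m \<le> k" "k \<le> l"
  shows "(\<Sum>p=Suc m..l. (if p \<le> k then w else 1) * (f (p - 1) - f p)) = w * (f m - f k) + (f k - f l)"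
proof -
  have "{Suc m..l} = {Suc m..k} \<union> {Suc k..l}"
    using assms by auto
  then have "(\<Sum>p=Suc m..l. (if p \<le> k then w else 1) * (f (p - 1) - f p))
      = (\<Sum>p=Suc m..k. w * (f (p - 1) - f p)) + (\<Sum>p=Suc k..l. f (p - 1) - f p)"
    by (simp add: sum.union_disjoint)
  then show ?thesis
    using sum_telescope_down[of m k f] sum_telescope_down[of k l f] assms
    by (simp add: sum_distrib_left[symmetric])
qed

definition prefix_count :: "nat \<Rightarrow> (letter \<Rightarrow> nat) \<Rightarrow> nat \<Rightarrow> nat" where
  "prefix_count n \<gamma> p = (\<Sum>r=1..p. \<gamma> (letter_at n r))"

lemma prefix_count_Suc: "prefix_count n \<gamma> (Suc p) = prefix_count n \<gamma> p + \<gamma> (letter_at n (Suc p))"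
  unfolding prefix_count_def by simp

lemma prefix_count_total: "prefix_count n \<gamma> (2*n) = (\<Sum>x\<in>Bset n. \<gamma> x)"
  unfolding prefix_count_def sum_Bset_letter_at ..

lemma lin_exp_letter_at:
  assumes "n \<ge> 1" "p \<in> {1..2*n}"
  shows "lin_exp n (letter_at n p) \<gamma> = (if p = 1 then real (\<gamma> (Unb 1)) - real (\<gamma> (Bar 1))
     else real (prefix_count n \<gamma> p))"
proof -
  let ?g = "\<lambda>r. real (\<gamma> (letter_at n r))"
  have "lin_exp n (letter_at n p) \<gamma> = (\<Sum>r=1..2*n. H (letter_at n p) (letter_at n r) * ?g r)"
    unfolding lin_exp_def sum_Bset_letter_at ..
  also have "\<dots> = (\<Sum>r=1..2*n. if p = 1 then (if r = 1 then ?g r else 0) - (if r = 2*n then ?g r else 0)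
      else if r \<le> p then ?g r else 0)"
    using assms by (intro sum.cong) (auto simp: H_letter_at)
  also have "\<dots> = (if p = 1 then ?g 1 - ?g (2*n) else (\<Sum>r\<in>{1..2*n} \<inter> {r. r \<le> p}. ?g r))"
    using assms(1) by (simp add: sum_subtractf sum.If_cases)
  also have "{1..2*n} \<inter> {r. r \<le> p} = {1..p}"
    using assms(2) by auto
  finally show ?thesis
    using letter_at_first[OF assms(1)] letter_at_last[OF assms(1)] by (simp add: prefix_count_def)
qed

lemma H_Unb_1: "b \<in> Bset n \<Longrightarrow> H b (Unb 1) = 1"
  unfolding H_def Bset_def by auto

lemma recursion_term_first:
  assumes "n \<ge> 1" "0 < q" "b \<in> Bset n"
  shows "recursion_term n q J b (Unb 1) \<gamma> = q ^ J * ratio_factor q (Unb 1) \<gamma>"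
  using assms lin_exp_letter_at[of n 1 \<gamma>] letter_at_first[OF assms(1)] H_Unb_1[OF assms(3)]
  by (simp add: recursion_term_def G_rat_def powr_realpow)

lemma recursion_term_last:
  assumes "n \<ge> 1" "(\<Sum>x\<in>Bset n. \<gamma> x) = J"
  shows "recursion_term n q J b (Bar 1) \<gamma>
    = q powr (real J * (H b (Bar 1) + 1) + real (\<gamma> (Unb 1)) - real (\<gamma> (Bar 1))) * ratio_factor q (Bar 1) \<gamma>"
  using assms lin_exp_letter_at[of n "2*n" \<gamma>] letter_at_last[OF assms(1)] prefix_count_total[of n \<gamma>]
  by (simp add: recursion_term_def G_rat_def algebra_simps)

lemma recursion_term_inner:
  assumes "n \<ge> 1" "0 < q" "p \<in> {2..2*n-1}"
  shows "recursion_term n q J b (letter_at n p) \<gamma> = q powr (real J * H b (letter_at n p))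
    * (q ^ prefix_count n \<gamma> (p - 1) - q ^ prefix_count n \<gamma> p) * G_rat q (letter_at n p) \<gamma>"
proof -
  have p: "p = Suc (p - 1)" "p \<in> {1..2*n}" "p \<noteq> 1"
    using assms(3) by auto
  have "prefix_count n \<gamma> p = prefix_count n \<gamma> (p - 1) + \<gamma> (letter_at n p)"
    by (metis p(1) prefix_count_Suc)
  then show ?thesis
    using assms letter_at_inner[OF assms(3)] lin_exp_letter_at[OF assms(1) p(2), of \<gamma>]
    by (simp add: recursion_term_def ratio_factor_def powr_add powr_realpow power_add algebra_simps)
qed

lemma sum_first_middle_last:
  fixes l :: nat
  assumes "1 < l"
  shows "(\<Sum>p=1..l. g p) = g 1 + (\<Sum>p=2..l-1. g p) + g l"
  using assms by (cases l) (simp_all add: sum.atLeast_Suc_atMost numeral_2_eq_2)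

lemma recursion_term_inner_sum:
  fixes \<gamma> :: "letter \<Rightarrow> nat"
  assumes n: "n \<ge> 1" and q: "0 < q" and pb: "pb \<in> {1..2*n}"
  defines "f \<equiv> \<lambda>p. q ^ prefix_count n \<gamma> p" and "k \<equiv> min pb (2*n - 1)"
  shows "(\<Sum>p=2..2*n-1. recursion_term n q J (letter_at n pb) (letter_at n p) \<gamma>)
     = (q ^ J * (f 1 - f k) + (f k - f (2*n - 1)))
       * ((q ^ \<gamma> (Unb 1) + q ^ \<gamma> (Bar 1)) / (1 + q ^ (\<gamma> (Unb 1) + \<gamma> (Bar 1))))"
    (is "_ = _ * ?G")
proof -
  have summand: "recursion_term n q J (letter_at n pb) (letter_at n p) \<gamma>
      = (if p \<le> k then q ^ J else 1) * (f (p - 1) - f p) * ?G"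
    if p: "p \<in> {2..2*n-1}" for p
  proof -
    have "H (letter_at n pb) (letter_at n p) = (if p \<le> k then 1 else 0)"
      using p pb by (auto simp: H_letter_at k_def)
    then show ?thesis
      using recursion_term_inner[OF n q p] letter_at_inner[OF p] q
      by (simp add: G_rat_def f_def powr_realpow)
  qed
  have "(\<Sum>p=2..2*n-1. recursion_term n q J (letter_at n pb) (letter_at n p) \<gamma>)
      = (\<Sum>p=Suc 1..2*n-1. (if p \<le> k then q ^ J else 1) * (f (p - 1) - f p)) * ?G"
    unfolding sum_distrib_right numeral_2_eq_2[symmetric] by (intro sum.cong) (simp_all add: summand)
  also have "\<dots> = (q ^ J * (f 1 - f k) + (f k - f (2*n - 1))) * ?G"
    using pb by (subst sum_weighted_telescope) (auto simp: k_def, presburger)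
  finally show ?thesis .
qed

text \<open>
  u, v, w stand for q^gamma(1), q^gamma(bar 1), q^J; r is what the telescoping inner sum leaves
  at the position of b, and h is the power of q carried by the term of bar 1.
\<close>
lemma recursion_sum_identities:
  fixes u v w s :: real
  assumes "0 < u" "0 < v"
  defines "L \<equiv> \<lambda>r h. w * ((1 - u*u) / (1 + u*v)) + (w * (u - r) + (r - w / v)) * ((u + v) / (1 + u*v))
      + h * (u / v) * ((1 - v*v) / (1 + u*v))"
  shows "L u 1 = (1 - w) * (u / v)"
    and "L (w / v) (w * w) = (1 - w) * w"
    and "L s w = (1 - w) * s * ((u + v) / (1 + u*v))"
proof -
  define d where "d = 1 / (1 + u*v)"
  define z where "z = 1 / v"
  have d: "d * (1 + u*v) = 1" and z: "z * v = 1"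
    unfolding d_def z_def using assms(1,2) by (simp_all add: add_pos_pos[THEN less_imp_neq, symmetric])
  have div: "x / (1 + u*v) = x * d" "x / v = x * z" for x
    unfolding d_def z_def by simp_all
  show "L u 1 = (1 - w) * (u / v)" "L (w / v) (w * w) = (1 - w) * w"
    "L s w = (1 - w) * s * ((u + v) / (1 + u*v))"
    unfolding L_def div using d z by algebra+
qed

lemma prefix_count_first: "n \<ge> 1 \<Longrightarrow> prefix_count n \<gamma> 1 = \<gamma> (Unb 1)"
  using letter_at_first[of n] by (simp add: prefix_count_def)

lemma prefix_count_last:
  assumes "n \<ge> 1"
  shows "prefix_count n \<gamma> (2*n - 1) + \<gamma> (Bar 1) = (\<Sum>x\<in>Bset n. \<gamma> x)"
  using prefix_count_Suc[of n \<gamma> "2*n - 1"] letter_at_last[OF assms] assms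
  by (simp add: prefix_count_total)

lemma recursion_term_sum_expand:
  fixes \<gamma> :: "letter \<Rightarrow> nat"
  assumes n: "n \<ge> 1" and q: "0 < q" and pb: "pb \<in> {1..2*n}" and J: "(\<Sum>x\<in>Bset n. \<gamma> x) = J"
  defines "u \<equiv> q ^ \<gamma> (Unb 1)" and "v \<equiv> q ^ \<gamma> (Bar 1)" and "w \<equiv> q ^ J"
    and "s \<equiv> q ^ prefix_count n \<gamma> (min pb (2*n - 1))"
  shows "(\<Sum>x\<in>Bset n. recursion_term n q J (letter_at n pb) x \<gamma>)
    = w * ((1 - u*u) / (1 + u*v)) + (w * (u - s) + (s - w / v)) * ((u + v) / (1 + u*v))
      + q powr (real J * (H (letter_at n pb) (Bar 1) + 1)) * (u / v) * ((1 - v*v) / (1 + u*v))"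
proof -
  let ?b = "letter_at n pb"
  have powers: "(q^2) ^ \<gamma> (Unb 1) = u * u" "(q^2) ^ \<gamma> (Bar 1) = v * v"
      "q ^ (\<gamma> (Unb 1) + \<gamma> (Bar 1)) = u * v"
    unfolding u_def v_def by (simp_all add: power_add power2_eq_square power_mult_distrib)
  have "q ^ prefix_count n \<gamma> (2*n - 1) = w / v"
    using prefix_count_last[OF n, of \<gamma>] J q unfolding w_def v_def by (auto simp: power_add)
  then have "(\<Sum>p=2..2*n-1. recursion_term n q J ?b (letter_at n p) \<gamma>)
      = (w * (u - s) + (s - w / v)) * ((u + v) / (1 + u*v))"
    using recursion_term_inner_sum[OF n q pb, of J \<gamma>] prefix_count_first[OF n, of \<gamma>] powers
    unfolding s_def u_def v_def w_def by simp
  moreover have "recursion_term n q J ?b (Unb 1) \<gamma> = w * ((1 - u*u) / (1 + u*v))"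
    using recursion_term_first[OF n q, of ?b] bij_betw_apply[OF bij_betw_letter_at pb] powers
    by (simp add: ratio_factor_def w_def)
  moreover have "recursion_term n q J ?b (Bar 1) \<gamma>
      = q powr (real J * (H ?b (Bar 1) + 1)) * (u / v) * ((1 - v*v) / (1 + u*v))"
    using recursion_term_last[OF n J] q powers
    by (simp add: ratio_factor_def powr_add powr_diff powr_realpow u_def v_def)
  moreover have "(\<Sum>x\<in>Bset n. recursion_term n q J ?b x \<gamma>)
      = recursion_term n q J ?b (Unb 1) \<gamma> + (\<Sum>p=2..2*n-1. recursion_term n q J ?b (letter_at n p) \<gamma>)
        + recursion_term n q J ?b (Bar 1) \<gamma>"
    using n sum_first_middle_last[of "2*n" "\<lambda>p. recursion_term n q J ?b (letter_at n p) \<gamma>"]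
      letter_at_first[OF n] letter_at_last[OF n]
    by (simp add: sum_Bset_letter_at)
  ultimately show ?thesis
    by simp
qed

lemma recursion_term_sum_first:
  assumes n: "n \<ge> 1" and q: "0 < q" and J: "(\<Sum>x\<in>Bset n. \<gamma> x) = J"
  shows "(\<Sum>x\<in>Bset n. recursion_term n q J (Unb 1) x \<gamma>)
    = (1 - q ^ J) * q powr lin_exp n (Unb 1) \<gamma> * G_rat q (Unb 1) \<gamma>"
proof -
  let ?u = "q ^ \<gamma> (Unb 1)" and ?v = "q ^ \<gamma> (Bar 1)"
  have pb: "1 \<in> {1..2*n}"
    using n by simp
  have "q powr lin_exp n (Unb 1) \<gamma> = ?u / ?v"
    using lin_exp_letter_at[OF n pb, of \<gamma>] letter_at_first[OF n] q by (simp add: powr_diff powr_realpow)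
  then show ?thesis
    using recursion_term_sum_expand[OF n q pb J] recursion_sum_identities(1)[of ?u ?v "q ^ J"]
      prefix_count_first[OF n] letter_at_first[OF n] q n
    by (simp add: H_def G_rat_def)
qed

lemma recursion_term_sum_last:
  assumes n: "n \<ge> 1" and q: "0 < q" and J: "(\<Sum>x\<in>Bset n. \<gamma> x) = J"
  shows "(\<Sum>x\<in>Bset n. recursion_term n q J (Bar 1) x \<gamma>)
    = (1 - q ^ J) * q powr lin_exp n (Bar 1) \<gamma> * G_rat q (Bar 1) \<gamma>"
proof -
  let ?v = "q ^ \<gamma> (Bar 1)" and ?w = "q ^ J"
  have pb: "2*n \<in> {1..2*n}"
    using n by simp
  have "q powr lin_exp n (Bar 1) \<gamma> = ?w"
    using lin_exp_letter_at[OF n pb, of \<gamma>] letter_at_last[OF n] prefix_count_total[of n \<gamma>] J q n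
    by (simp add: powr_realpow)
  moreover have "q ^ prefix_count n \<gamma> (2*n - 1) = ?w / ?v"
    using prefix_count_last[OF n, of \<gamma>] J q by (auto simp: power_add)
  moreover have "q powr (real J * (H (Bar 1) (Bar 1) + 1)) = q powr (real J + real J)"
    by (simp add: H_refl mult.commute)
  then have "q powr (real J * (H (Bar 1) (Bar 1) + 1)) = ?w * ?w"
    by (simp only: powr_add powr_realpow[OF q])
  ultimately show ?thesis
    using recursion_term_sum_expand[OF n q pb J] recursion_sum_identities(2)[of "q ^ \<gamma> (Unb 1)" ?v ?w]
      letter_at_last[OF n] q n
    by (simp add: G_rat_def)
qed

lemma recursion_term_sum_inner:
  assumes n: "n \<ge> 1" and q: "0 < q" and J: "(\<Sum>x\<in>Bset n. \<gamma> x) = J" and pb: "pb \<in> {2..2*n-1}"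
  defines "b \<equiv> letter_at n pb"
  shows "(\<Sum>x\<in>Bset n. recursion_term n q J b x \<gamma>) = (1 - q ^ J) * q powr lin_exp n b \<gamma> * G_rat q b \<gamma>"
proof -
  let ?u = "q ^ \<gamma> (Unb 1)" and ?v = "q ^ \<gamma> (Bar 1)"
  have pb': "pb \<in> {1..2*n}" "pb \<noteq> 1" "min pb (2*n - 1) = pb"
    using pb by auto
  have "H b (Bar 1) = 0"
    using H_letter_at[OF pb'(1), of "2*n"] letter_at_last[OF n] pb n unfolding b_def by auto
  moreover have "q powr lin_exp n b \<gamma> = q ^ prefix_count n \<gamma> pb"
    using lin_exp_letter_at[OF n pb'(1), of \<gamma>] pb'(2) q unfolding b_def by (simp add: powr_realpow)
  moreover have "G_rat q b \<gamma> = (?u + ?v) / (1 + ?u * ?v)"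
    using letter_at_inner[OF pb] unfolding b_def by (simp add: G_rat_def power_add)
  ultimately show ?thesis
    using recursion_term_sum_expand[OF n q pb'(1) J] pb'(3) q
      recursion_sum_identities(3)[of ?u ?v "q ^ J" "q ^ prefix_count n \<gamma> pb"]
    unfolding b_def by (simp add: powr_realpow)
qed

lemma recursion_term_sum:
  assumes n: "n \<ge> 1" and q: "0 < q" and b: "b \<in> Bset n" and J: "(\<Sum>x\<in>Bset n. \<gamma> x) = J"
  shows "(\<Sum>x\<in>Bset n. recursion_term n q J b x \<gamma>) = (1 - q ^ J) * q powr lin_exp n b \<gamma> * G_rat q b \<gamma>"
proof -
  obtain pb where pb: "pb \<in> {1..2*n}" and b_pb: "b = letter_at n pb"
    using b bij_betw_imp_surj_on[OF bij_betw_letter_at, of n] by blast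
  then consider "b = Unb 1" | "b = Bar 1" | "pb \<in> {2..2*n-1}"
    using letter_at_first[OF n] letter_at_last[OF n] by (cases "pb = 1"; cases "pb = 2*n") auto
  then show ?thesis
    using recursion_term_sum_first[OF n q J] recursion_term_sum_last[OF n q J]
      recursion_term_sum_inner[OF n q J] b_pb
    by cases simp_all
qed

lemma closed_form_Suc:
  assumes n: "n \<ge> 1" and q: "0 < q" "q \<noteq> 1" and b: "b \<in> Bset n"
    and J: "(\<Sum>x\<in>Bset n. \<gamma> x) = Suc j"
  shows "closed_form n q (Suc j) b \<gamma> = (\<Sum>y\<in>Bset n. if 0 < \<gamma> y then
      q powr (real (Suc j) * H b y) * closed_form n q j y (\<gamma>(y := \<gamma> y - 1)) else 0)"
proof -
  define P where "P = q powr quad_exp n \<gamma> * qnumer q (Suc j) \<gamma> / qdenom n q \<gamma> / (1 - q ^ Suc j)"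
  have "(if 0 < \<gamma> y then q powr (real (Suc j) * H b y) * closed_form n q j y (\<gamma>(y := \<gamma> y - 1)) else 0)
      = P * recursion_term n q (Suc j) b y \<gamma>" if "y \<in> Bset n" for y
    using closed_form_remove[OF q that, of \<gamma> j b]
    by (auto simp: P_def recursion_term_def ratio_factor_def)
  then have "(\<Sum>y\<in>Bset n. if 0 < \<gamma> y then
      q powr (real (Suc j) * H b y) * closed_form n q j y (\<gamma>(y := \<gamma> y - 1)) else 0)
      = P * (\<Sum>y\<in>Bset n. recursion_term n q (Suc j) b y \<gamma>)"
    by (simp add: sum_distrib_left)
  also have "\<dots> = closed_form n q (Suc j) b \<gamma>"
    unfolding recursion_term_sum[OF n q(1) b J] P_def closed_form_def Qexp_eq
    using power_neq_one[of q "Suc j"] q by (simp add: powr_add)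
  finally show ?thesis ..
qed

lemma sum_fun_upd_pred:
  fixes \<gamma> :: "'a \<Rightarrow> nat"
  assumes "finite A" "y \<in> A" "0 < \<gamma> y"
  shows "(\<Sum>x\<in>A. (\<gamma>(y := \<gamma> y - 1)) x) = (\<Sum>x\<in>A. \<gamma> x) - 1"
proof -
  have "(\<Sum>x\<in>A-{y}. (\<gamma>(y := \<gamma> y - 1)) x) = (\<Sum>x\<in>A-{y}. \<gamma> x)"
    by (intro sum.cong) auto
  then show ?thesis
    using assms by (simp add: sum.remove)
qed

lemma paths_gf_0:
  assumes "0 < q"
  shows "paths_gf n q 0 b (\<lambda>x\<in>Bset n. 0) = 1"
  using assms by (simp add: paths_gf_def content_def energy_def)

lemma closed_form_0:
  assumes "n \<ge> 1" "0 < q"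
  shows "closed_form n q 0 b (\<lambda>x\<in>Bset n. 0) = 1"
proof -
  have "Unb i \<in> Bset n" "Bar i \<in> Bset n" if "i \<in> {1..n}" for i
    using that unfolding Bset_def by auto
  then show ?thesis
    using assms
    by (simp add: closed_form_def Qexp_def qnumer_def qdenom_def qpoch_def G_rat_def)
qed

lemma paths_gf_eq_closed_form:
  assumes n: "n \<ge> 1" and q: "0 < q" "q \<noteq> 1"
  shows "b \<in> Bset n \<Longrightarrow> \<gamma> \<in> Pi\<^sub>E (Bset n) (\<lambda>_. UNIV) \<Longrightarrow> (\<Sum>x\<in>Bset n. \<gamma> x) = j
    \<Longrightarrow> paths_gf n q j b \<gamma> = closed_form n q j b \<gamma>"
proof (induction j arbitrary: b \<gamma>)
  case 0
  then have "\<gamma> = (\<lambda>x\<in>Bset n. 0)"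
    by (auto simp: PiE_def extensional_def fun_eq_iff)
  then show ?case
    using paths_gf_0[OF q(1), of n b] closed_form_0[OF n q(1), of b] by metis
next
  case (Suc j)
  have "paths_gf n q j y (\<gamma>(y := \<gamma> y - 1)) = closed_form n q j y (\<gamma>(y := \<gamma> y - 1))"
    if "y \<in> Bset n" "0 < \<gamma> y" for y
  proof (rule Suc.IH[OF that(1)])
    show "\<gamma>(y := \<gamma> y - 1) \<in> Pi\<^sub>E (Bset n) (\<lambda>_. UNIV)"
      using Suc.prems(2) that(1) by (auto simp: PiE_def extensional_def)
    show "(\<Sum>x\<in>Bset n. (\<gamma>(y := \<gamma> y - 1)) x) = j"
      using sum_fun_upd_pred[of "Bset n" y \<gamma>, OF finite_Bset that] Suc.prems(3) by simp
  qed
  then show ?case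
    unfolding paths_gf_Suc closed_form_Suc[OF n q Suc.prems(1,3)] by (intro sum.cong) auto
qed

lemma finite_Gam: "finite (Gam n j mus)"
proof (rule finite_subset)
  show "Gam n j mus \<subseteq> Pi\<^sub>E (Bset n) (\<lambda>_. {0..j})"
  proof
    fix \<gamma> assume "\<gamma> \<in> Gam n j mus"
    then have "\<gamma> \<in> Pi\<^sub>E (Bset n) (\<lambda>_. UNIV)" "(\<Sum>x\<in>Bset n. \<gamma> x) = j"
      unfolding Gam_def by auto
    moreover have "\<gamma> x \<le> (\<Sum>x\<in>Bset n. \<gamma> x)" if "x \<in> Bset n" for x
      using that by (intro member_le_sum) auto
    ultimately show "\<gamma> \<in> Pi\<^sub>E (Bset n) (\<lambda>_. {0..j})"
      by auto
  qed
qed (simp add: finite_PiE)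

lemma gfun_eq_sum_paths_gf:
  assumes "n \<ge> 2"
  shows "gfun n j b (muw n mus) q = (\<Sum>\<gamma>\<in>Gam n j mus. paths_gf n q j b \<gamma>)"
proof -
  let ?A = "Pi\<^sub>E {1..j} (\<lambda>_. Bset n)"
  let ?P = "{bs \<in> ?A. (\<lambda>k. \<Sum>i=1..j. wt (bs i) k) = muw n mus}"
  let ?h = "\<lambda>bs. q powr energy j b bs"
  have "gfun n j b (muw n mus) q = sum ?h ?P"
    unfolding gfun_def energy_def ..
  also have "\<dots> = (\<Sum>\<gamma>\<in>Gam n j mus. sum ?h {bs. bs \<in> ?P \<and> content n j bs = \<gamma>})"
    using path_weight_eq_muw_iff[OF assms]
    by (intro sum.group[symmetric]) (auto simp: finite_PiE finite_Gam)
  also have "\<dots> = (\<Sum>\<gamma>\<in>Gam n j mus. paths_gf n q j b \<gamma>)"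
  proof (intro sum.cong refl)
    fix \<gamma> assume "\<gamma> \<in> Gam n j mus"
    then have "{bs. bs \<in> ?P \<and> content n j bs = \<gamma>} = {bs \<in> ?A. content n j bs = \<gamma>}"
      using path_weight_eq_muw_iff[OF assms] by auto
    then show "sum ?h {bs. bs \<in> ?P \<and> content n j bs = \<gamma>} = paths_gf n q j b \<gamma>"
      unfolding paths_gf_def by (simp add: sum.inter_filter finite_PiE)
  qed
  finally show ?thesis .
qed

lemma Gfac_eq_G_rat:
  assumes q: "0 < q" and mus: "mus 1 = int (\<gamma> (Unb 1)) - int (\<gamma> (Bar 1))"
  shows "Gfac b mus \<gamma> q = G_rat q b \<gamma>"
proof (cases "b \<in> {Unb 1, Bar 1}")
  case True
  then show ?thesis
    unfolding Gfac_def G_rat_def by simp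
next
  case False
  define a where "a = real (\<gamma> (Unb 1))"
  define c where "c = real (\<gamma> (Bar 1))"
  define h where "h = q powr ((a + c) / 2)"
  have h: "0 < h" "h * h = q powr (a + c)"
    unfolding h_def using q by (simp_all flip: powr_add)
  have "(a - c) / 2 = a - (a + c) / 2" "- (a - c) / 2 = c - (a + c) / 2" "- (a + c) / 2 = 0 - (a + c) / 2"
    by argo+
  then have half_powers: "q powr ((a - c) / 2) = q powr a / h" "q powr (- (a - c) / 2) = q powr c / h"
      "q powr (- (a + c) / 2) = 1 / h"
    unfolding h_def using q by (simp_all only: powr_diff) simp_all
  have "real_of_int (mus 1) = a - c" "real (\<gamma> (Unb 1) + \<gamma> (Bar 1)) = a + c"
    unfolding a_def c_def using mus by simp_all
  then have "Gfac b mus \<gamma> q = (q powr ((a - c) / 2) + q powr (- (a - c) / 2))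
      / (q powr ((a + c) / 2) + q powr (- (a + c) / 2))"
    unfolding Gfac_def using False by simp
  also have "\<dots> = (q powr a + q powr c) / (1 + q powr (a + c))"
    unfolding half_powers h_def[symmetric] h(2)[symmetric] using h(1) by (simp add: divide_simps add_pos_nonneg)
  also have "\<dots> = G_rat q b \<gamma>"
    unfolding G_rat_def a_def c_def using False q by (simp add: powr_realpow flip: of_nat_add)
  finally show ?thesis .
qed

theorem mainTheorem15:
  fixes n j :: nat and b :: letter and mus :: "nat \<Rightarrow> int" and q :: real
  assumes "n \<ge> 3" and "b \<in> Bset n" and "0 < q" and "q \<noteq> 1"
  shows "gfun n j b (muw n mus) q = rhs n j b mus q"
proof -
  have n: "n \<ge> 2" "n \<ge> 1"
    using assms(1) by simp_all
  have "gfun n j b (muw n mus) q = (\<Sum>\<gamma>\<in>Gam n j mus. paths_gf n q j b \<gamma>)"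
    by (rule gfun_eq_sum_paths_gf[OF n(1)])
  also have "\<dots> = (\<Sum>\<gamma>\<in>Gam n j mus. closed_form n q j b \<gamma>)"
    using paths_gf_eq_closed_form[OF n(2) assms(3,4) assms(2)] by (intro sum.cong) (auto simp: Gam_def)
  also have "\<dots> = rhs n j b mus q"
    unfolding rhs_def closed_form_def qnumer_def qdenom_def
    using Gfac_eq_G_rat[OF assms(3)] n(2) by (intro sum.cong) (auto simp: Gam_def)
  finally show ?thesis .
qed

end
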